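(* Let $n\ge 1$ and consider a bin $B=(l_s,u_s]\times(l_t,u_t]\subseteq[0,n]^2$ with $l_s<u_s$, $l_t<u_t$, containing $o_i\ge 1$ observed rank pairs $(s_{i1},t_{i1}),\dots,(s_{io_i},t_{io_i})\in B$. Let $e_i=(u_s-l_s)(u_t-l_t)/n$ be its expected count. For a vertical split at $c\in(l_s,u_s)$, let $o_{i-}(c)=\#\{k: s_{ik}\le c\}$, $o_{i+}(c)=o_i-o_{i-}(c)$, $e_{i-}(c)=(c-l_s)(u_t-l_t)/n$ and $e_{i+}(c)=(u_s-c)(u_t-l_t)/n$. With the mi score $\mathrm{mi}(o,e)=\frac{o}{n}\log\frac{o}{e}$ (with the convention $0\log 0=0$), define $$\delta_i(c,\mathrm{mi})=\mathrm{mi}\big(o_{i+}(c),e_{i+}(c)\big)+\mathrm{mi}\big(o_{i-}(c),e_{i-}(c)\big)-\mathrm{mi}(o_i,e_i).$$ Then any $c^*\in(l_s,u_s)$ maximizing $\delta_i(c,\mathrm{mi})$ over $c\in(l_s,u_s)$ is one of the point coordinates $s_{i1},\dots,s_{io_i}$. The analogous statement holds for horizontal splits at $c\in(l_t,u_t)$ (with the roles of $s$ and $t$ interchanged), where the maximizer is one of $t_{i1},\dots,t_{io_i}$.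
   Context: Observations $(x_k,y_k)$, $k=1,\dots,n$, are converted to marginal ranks $s_k,t_k\in\{1,\dots,n\}$ (ties broken randomly), so under independence the rank pairs are uniform on the rank space $[0,n]^2$ and the expected number of points in a region of area $a$ is $a/n$. A bin is a rectangle $(l_s,u_s]\times(l_t,u_t]$; splitting it by a vertical line at $c$ produces a lower bin $(l_s,c]\times(l_t,u_t]$ and an upper bin $(c,u_s]\times(l_t,u_t]$ (a point with coordinate equal to $c$ is counted in the lower bin); horizontal splits are defined analogously in the $t$ coordinate. *)

theory Defs
  imports Complex_Main
begin

definition mi :: "nat \<Rightarrow> nat \<Rightarrow> real \<Rightarrow> real" where
  "mi n oc e = (if oc = 0 then 0 else real oc / real n * ln (real oc / e))"

text \<open>Gain of a vertical split at c of the bin (ls,us] x (lt,ut] containing the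
  points with first rank coordinates s 0, ..., s (oi-1).  Points with coordinate
  equal to c are counted in the lower bin.\<close>
definition delta_v ::
  "nat \<Rightarrow> nat \<Rightarrow> (nat \<Rightarrow> nat) \<Rightarrow> real \<Rightarrow> real \<Rightarrow> real \<Rightarrow> real \<Rightarrow> real \<Rightarrow> real" where
  "delta_v n oi s ls us lt ut c =
     (let om = card {k. k < oi \<and> real (s k) \<le> c};
          op = oi - om;
          em = (c - ls) * (ut - lt) / real n;
          ep = (us - c) * (ut - lt) / real n;
          ei = (us - ls) * (ut - lt) / real n
      in mi n op ep + mi n om em - mi n oi ei)"

definition delta_h ::
  "nat \<Rightarrow> nat \<Rightarrow> (nat \<Rightarrow> nat) \<Rightarrow> real \<Rightarrow> real \<Rightarrow> real \<Rightarrow> real \<Rightarrow> real \<Rightarrow> real" where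
  "delta_h n oi t ls us lt ut c =
     (let om = card {k. k < oi \<and> real (t k) \<le> c};
          op = oi - om;
          em = (c - lt) * (us - ls) / real n;
          ep = (ut - c) * (us - ls) / real n;
          ei = (us - ls) * (ut - lt) / real n
      in mi n op ep + mi n om em - mi n oi ei)"

end

theory Submission
  imports Defs
begin

text \<open>Away from the point coordinates the counts o_{i-}(c) and o_{i+}(c) are locally constant,
  while the expected counts are affine in c.  For fixed o > 0 the score mi(o, e) is
  -(o/n) log e plus a constant, hence strictly convex in e, and at least one of the two counts is
  positive.  So the gain is strictly midpoint convex near such a c, and c - h or c + h does better.\<close>

lemma ln_midpoint_strict_concave:
  fixes d e :: real
  assumes "0 < d" "d < e"
  shows "ln (e - d) + ln (e + d) < 2 * ln e"
proof -
  have "ln (e - d) + ln (e + d) = ln (e\<^sup>2 - d\<^sup>2)"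
    using assms by (simp add: ln_mult_pos[symmetric] power2_eq_square algebra_simps)
  also have "\<dots> < ln (e\<^sup>2)"
    using assms power_strict_mono[of d e 2] by simp
  also have "\<dots> = 2 * ln e"
    using assms by (simp add: ln_realpow)
  finally show ?thesis .
qed

lemma mi_midpoint_strict_convex:
  assumes "0 < n" "0 < oc" "0 < d" "d < e"
  shows "2 * mi n oc e < mi n oc (e - d) + mi n oc (e + d)"
proof -
  have mi_eq_ln_diff: "mi n oc x = real oc / real n * (ln (real oc) - ln x)" if "0 < x" for x
    using that assms(2) by (simp add: mi_def ln_div)
  have "0 < real oc / real n"
    using assms by simp
  with ln_midpoint_strict_concave[OF assms(3,4)]
  have "real oc / real n * (2 * ln (real oc) - 2 * ln e)
      < real oc / real n * (2 * ln (real oc) - (ln (e - d) + ln (e + d)))"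
    by (intro mult_strict_left_mono) auto
  then show ?thesis
    using assms by (simp add: mi_eq_ln_diff algebra_simps)
qed

lemma mi_midpoint_convex:
  assumes "0 < d" "d < e"
  shows "2 * mi n oc e \<le> mi n oc (e - d) + mi n oc (e + d)"
  using mi_midpoint_strict_convex[OF _ _ assms, of n oc] by (cases "n = 0 \<or> oc = 0") (auto simp: mi_def)

lemma eventually_count_le_eq:
  fixes a :: "nat \<Rightarrow> real"
  assumes "\<forall>k<oi. a k \<noteq> c"
  shows "\<forall>\<^sub>F x in nhds c. card {k. k < oi \<and> a k \<le> x} = card {k. k < oi \<and> a k \<le> c}"
proof -
  have "\<forall>\<^sub>F x in nhds c. a k \<le> x \<longleftrightarrow> a k \<le> c" if "k < oi" for k
  proof (cases "a k < c")
    case True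
    then show ?thesis
      using eventually_nhds_in_open[of "{a k<..}" c] by (auto elim!: eventually_mono)
  next
    case False
    with assms that have "c < a k" by force
    then show ?thesis
      using eventually_nhds_in_open[of "{..<a k}" c] by (auto elim!: eventually_mono)
  qed
  then have "\<forall>\<^sub>F x in nhds c. \<forall>k\<in>{..<oi}. a k \<le> x \<longleftrightarrow> a k \<le> c"
    by (simp add: eventually_ball_finite)
  then show ?thesis
    by (rule eventually_mono) (metis lessThan_iff)
qed

text \<open>The c-dependent part of the split gains; w is the side of the bin parallel to the split
  line.\<close>
definition split_gain :: "nat \<Rightarrow> nat \<Rightarrow> (nat \<Rightarrow> real) \<Rightarrow> real \<Rightarrow> real \<Rightarrow> real \<Rightarrow> real \<Rightarrow> real" where
  "split_gain n oi a w l u c =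
     (let m = card {k. k < oi \<and> a k \<le> c}
      in mi n (oi - m) ((u - c) * w / real n) + mi n m ((c - l) * w / real n))"

lemma delta_v_eq_split_gain:
  "delta_v n oi s ls us lt ut c =
     split_gain n oi (\<lambda>k. real (s k)) (ut - lt) ls us c - mi n oi ((us - ls) * (ut - lt) / real n)"
  by (simp add: delta_v_def split_gain_def Let_def)

lemma delta_h_eq_split_gain:
  "delta_h n oi t ls us lt ut c =
     split_gain n oi (\<lambda>k. real (t k)) (us - ls) lt ut c - mi n oi ((us - ls) * (ut - lt) / real n)"
  by (simp add: delta_h_def split_gain_def Let_def)

lemma split_gain_midpoint_strict_convex:
  assumes "0 < n" "0 < oi" "0 < w" "0 < h" "l < c - h" "c + h < u"
    and "card {k. k < oi \<and> a k \<le> c - h} = card {k. k < oi \<and> a k \<le> c}"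
    and "card {k. k < oi \<and> a k \<le> c + h} = card {k. k < oi \<and> a k \<le> c}"
  shows "2 * split_gain n oi a w l u c < split_gain n oi a w l u (c - h) + split_gain n oi a w l u (c + h)"
proof -
  define m where "m = card {k. k < oi \<and> a k \<le> c}"
  define d where "d = h * w / real n"
  have expected_shift: "(u - (c - h)) * w / real n = (u - c) * w / real n + d"
    "(u - (c + h)) * w / real n = (u - c) * w / real n - d"
    "(c - h - l) * w / real n = (c - l) * w / real n - d"
    "(c + h - l) * w / real n = (c - l) * w / real n + d"
    by (simp_all add: d_def diff_divide_distrib add_divide_distrib algebra_simps)
  have d: "0 < d" "d < (u - c) * w / real n" "d < (c - l) * w / real n"
    using assms by (simp_all add: d_def divide_strict_right_mono)
  have upper_convex: "2 * mi n k ((u - c) * w / real n) \<le>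
      mi n k ((u - c) * w / real n - d) + mi n k ((u - c) * w / real n + d)" for k
    using mi_midpoint_convex[OF d(1,2)] .
  have lower_convex: "2 * mi n k ((c - l) * w / real n) \<le>
      mi n k ((c - l) * w / real n - d) + mi n k ((c - l) * w / real n + d)" for k
    using mi_midpoint_convex[OF d(1,3)] .
  consider "0 < oi - m" | "0 < m"
    using assms(2) by linarith
  then show ?thesis
  proof cases
    case 1
    with mi_midpoint_strict_convex[OF assms(1) 1 d(1,2)] lower_convex[of m]
    show ?thesis using assms(7,8) by (simp add: split_gain_def Let_def expected_shift m_def)
  next
    case 2
    with mi_midpoint_strict_convex[OF assms(1) 2 d(1,3)] upper_convex[of "oi - m"]
    show ?thesis using assms(7,8) by (simp add: split_gain_def Let_def expected_shift m_def)
  qed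
qed

lemma split_gain_argmax_at_point:
  assumes "0 < n" "0 < oi" "0 < w" "c \<in> {l<..<u}"
    and argmax: "\<forall>c'\<in>{l<..<u}. split_gain n oi a w l u c' \<le> split_gain n oi a w l u c"
  shows "\<exists>k<oi. c = a k"
proof (rule ccontr)
  assume "\<not> ?thesis"
  then have "\<forall>k<oi. a k \<noteq> c"
    by auto
  from eventually_count_le_eq[OF this] obtain r where "0 < r" and count_eq:
    "\<And>x. dist x c < r \<Longrightarrow> card {k. k < oi \<and> a k \<le> x} = card {k. k < oi \<and> a k \<le> c}"
    unfolding eventually_nhds_metric by blast
  define h where "h = min r (min (c - l) (u - c)) / 2"
  have "0 < h" "h < r" "h < c - l" "h < u - c"
    using assms(4) \<open>0 < r\<close> by (auto simp: h_def)
  then have h: "0 < h" "l < c - h" "c + h < u" "dist (c - h) c < r" "dist (c + h) c < r"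
    by (auto simp: dist_real_def)
  have "2 * split_gain n oi a w l u c < split_gain n oi a w l u (c - h) + split_gain n oi a w l u (c + h)"
    using split_gain_midpoint_strict_convex[OF assms(1-3) h(1-3)] count_eq h(4,5) by blast
  moreover have "split_gain n oi a w l u (c - h) \<le> split_gain n oi a w l u c"
    and "split_gain n oi a w l u (c + h) \<le> split_gain n oi a w l u c"
    using argmax h assms(4) by auto
  ultimately show False
    by linarith
qed

theorem proposition2:
  fixes n oi :: nat and s t :: "nat \<Rightarrow> nat" and ls us lt ut :: real
  assumes "n \<ge> 1"
    and "0 \<le> ls" and "ls < us" and "us \<le> real n"
    and "0 \<le> lt" and "lt < ut" and "ut \<le> real n"
    and "oi \<ge> 1"
    and "\<forall>k<oi. s k \<in> {1..n} \<and> t k \<in> {1..n}"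
    and "\<forall>k<oi. ls < real (s k) \<and> real (s k) \<le> us \<and> lt < real (t k) \<and> real (t k) \<le> ut"
  shows "(\<forall>c\<in>{ls<..<us}. (\<forall>c'\<in>{ls<..<us}. delta_v n oi s ls us lt ut c' \<le> delta_v n oi s ls us lt ut c)
            \<longrightarrow> (\<exists>k<oi. c = real (s k)))
       \<and> (\<forall>c\<in>{lt<..<ut}. (\<forall>c'\<in>{lt<..<ut}. delta_h n oi t ls us lt ut c' \<le> delta_h n oi t ls us lt ut c)
            \<longrightarrow> (\<exists>k<oi. c = real (t k)))"
proof (intro conjI ballI impI)
  fix c
  assume "c \<in> {ls<..<us}"
    and "\<forall>c'\<in>{ls<..<us}. delta_v n oi s ls us lt ut c' \<le> delta_v n oi s ls us lt ut c"
  then show "\<exists>k<oi. c = real (s k)"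
    using split_gain_argmax_at_point[of n oi "ut - lt" c ls us "\<lambda>k. real (s k)"] assms(1,6,8)
    by (simp add: delta_v_eq_split_gain)
next
  fix c
  assume "c \<in> {lt<..<ut}"
    and "\<forall>c'\<in>{lt<..<ut}. delta_h n oi t ls us lt ut c' \<le> delta_h n oi t ls us lt ut c"
  then show "\<exists>k<oi. c = real (t k)"
    using split_gain_argmax_at_point[of n oi "us - ls" c lt ut "\<lambda>k. real (t k)"] assms(1,3,8)
    by (simp add: delta_h_eq_split_gain)
qed

end
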